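(* Fix $D\ge1$, $\bar L\ge1$, a law $P_L$ on $\{1,\dots,\bar L\}$, $\Delta\ge0$, measurable weight functions $g_\nu$ as below, fixed vectors $k^*,v^*\in\mathbb R^D$, and a measurable activation $\sigma$ mapping each $\mathbb R^L$ ($1\le L\le\bar L$) to $\mathbb R^L$. Generate $(L,\epsilon^*,X,y)$ by: $L\sim P_L$; $\epsilon^*\sim\mathrm{Unif}(\{1,\dots,L\})$ given $L$; $X\in\mathbb R^{L\times D}$ with density $g_\nu(\epsilon^*,\frac1{\sqrt D}xk^* )\prod_{\ell=1}^L\mathcal N(x_\ell;0,I_D)$ given $(L,\epsilon^* )$; $y=\frac1{\sqrt D}X_{\epsilon^*}v^*+\Delta\xi$ with $\xi\sim\mathcal N(0,1)$ independent. For $k,v\in\mathbb R^D$ let $f_{\sigma,k,v}(X)=\sigma(\frac1{\sqrt D}Xk)^\top\frac1{\sqrt D}Xv$ and $\mathcal E_\sigma(k,v)=\mathbb E[(y-f_{\sigma,k,v}(X))^2]$ (expectation over $(L,\epsilon^*,X,\xi)$ with $k^*,v^*$ fixed), assumed finite for all $k,v$. Then there exists a function $\tilde{\mathcal E}_\sigma:\mathbb R^7\to\mathbb R$ such that for all $(k,v)\in(\mathbb R^D)^2$, $$\mathcal E_\sigma(k,v)=\tilde{\mathcal E}_\sigma(m_{kk^*},m_{vv^*},m_{kv^*},m_{vk^*},q_{kk},q_{vv},q_{vk}),$$ where $m_{kk^*}=\frac1Dk^\top k^*$, $m_{vv^*}=\frac1Dv^\top v^*$, $m_{kv^*}=\frac1Dk^\top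 v^*$, $m_{vk^*}=\frac1Dv^\top k^*$, $q_{kk}=\frac1Dk^\top k$, $q_{vv}=\frac1Dv^\top v$, $q_{vk}=\frac1Dk^\top v$.
   Context: The weight functions $g_\nu:\{1,\dots,L\}\times\mathbb R^L\to[0,\infty)$ are such that the displayed expression is a probability density in $x\in\mathbb R^{L\times D}$. $\mathcal N(x;\omega,V)$ is the Gaussian density with mean $\omega$ and covariance $V$. *)

theory Defs
  imports "HOL-Probability.Probability"
begin

text \<open>Dimension D = CARD('d); rows of X are vectors in real^'d; X is indexed by rows 1..L.\<close>

definition gauss_vec :: "real^'d \<Rightarrow> real" where
  "gauss_vec x = (2 * pi) powr (- real CARD('d) / 2) * exp (- (norm x)\<^sup>2 / 2)"

definition proj :: "nat \<Rightarrow> (nat \<Rightarrow> real^'d) \<Rightarrow> real^'d \<Rightarrow> (nat \<Rightarrow> real)" where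
  "proj L X w = (\<lambda>l\<in>{1..L}. (X l \<bullet> w) / sqrt (real CARD('d)))"

definition attn :: "(nat \<Rightarrow> (nat \<Rightarrow> real) \<Rightarrow> (nat \<Rightarrow> real)) \<Rightarrow> nat \<Rightarrow> (nat \<Rightarrow> real^'d)
    \<Rightarrow> real^'d \<Rightarrow> real^'d \<Rightarrow> real" where
  "attn \<sigma> L X k v = (\<Sum>l\<in>{1..L}. \<sigma> L (proj L X k) l * proj L X v l)"

definition dens_X :: "(nat \<Rightarrow> nat \<Rightarrow> (nat \<Rightarrow> real) \<Rightarrow> real) \<Rightarrow> real^'d \<Rightarrow> nat \<Rightarrow> nat
    \<Rightarrow> (nat \<Rightarrow> real^'d) \<Rightarrow> real" where
  "dens_X g kstar L eps X = g L eps (proj L X kstar) * (\<Prod>l\<in>{1..L}. gauss_vec (X l))"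

text \<open>Nonnegative integrand,
  so the expectation is the nonnegative integral.\<close>
definition risk :: "nat pmf \<Rightarrow> (nat \<Rightarrow> nat \<Rightarrow> (nat \<Rightarrow> real) \<Rightarrow> real)
    \<Rightarrow> (nat \<Rightarrow> (nat \<Rightarrow> real) \<Rightarrow> (nat \<Rightarrow> real)) \<Rightarrow> real \<Rightarrow> real^'d \<Rightarrow> real^'d
    \<Rightarrow> real^'d \<Rightarrow> real^'d \<Rightarrow> ennreal" where
  "risk PL g \<sigma> \<Delta> kstar vstar k v =
     (\<integral>\<^sup>+ L. (\<Sum>eps\<in>{1..L}. ennreal (1 / real L) *
        (\<integral>\<^sup>+ X. (\<integral>\<^sup>+ \<xi>.
            ennreal (dens_X g kstar L eps X * normal_density 0 1 \<xi>) *
            ennreal ((proj L X vstar eps + \<Delta> * \<xi> - attn \<sigma> L X k v)\<^sup>2)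
          \<partial>lborel) \<partial>(PiM {1..L} (\<lambda>_. (lborel :: (real^'d) measure)))))
      \<partial>measure_pmf PL)"

end

(*
  The risk is invariant under every orthogonal map Q of R^D fixing k* and v*: replacing (k, v) by
  (Q k, Q v) and substituting X_l := Q X_l in the X-integral leaves Lebesgue measure, the Gaussian
  factors and all the projections X k*, X v*, X k, X v unchanged.  Two pairs (k, v) and (k0, v0)
  with the same seven overlaps are related by such a map (a product of two Householder
  reflections), so the risk depends on (k, v) only through the overlaps.
*)
theory Submission
  imports Defs
begin

text \<open>The library proves invariance of Lebesgue measure under orthogonal maps only for
  well-ordered index types; it is transferred to an arbitrary finite index type through a copy
  of that type ordered by \<^const>\<open>to_nat\<close>.\<close>

typedef 'a ranked = "UNIV :: 'a set" by simp

instance ranked :: (finite) finite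
proof
  have "(UNIV :: 'a ranked set) = Abs_ranked ` UNIV"
    by (metis Rep_ranked_inverse surj_def)
  then show "finite (UNIV :: 'a ranked set)" by (metis finite finite_imageI)
qed

instantiation ranked :: (finite) linorder
begin
definition "x \<le> y \<longleftrightarrow> to_nat (Rep_ranked x) \<le> to_nat (Rep_ranked y)"
definition "x < y \<longleftrightarrow> to_nat (Rep_ranked x) < to_nat (Rep_ranked y)"
instance
proof
  fix x y z :: "'a ranked"
  show "(x < y) = (x \<le> y \<and> \<not> y \<le> x)" by (auto simp: less_eq_ranked_def less_ranked_def)
  show "x \<le> x" by (simp add: less_eq_ranked_def)
  show "x \<le> y \<Longrightarrow> y \<le> z \<Longrightarrow> x \<le> z" by (simp add: less_eq_ranked_def)
  show "x \<le> y \<Longrightarrow> y \<le> x \<Longrightarrow> x = y"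
    by (simp add: less_eq_ranked_def Rep_ranked_inject[symmetric])
  show "x \<le> y \<or> y \<le> x" by (auto simp: less_eq_ranked_def)
qed
end

instance ranked :: (finite) wellorder
proof
  fix P :: "'a ranked \<Rightarrow> bool" and a
  assume step: "\<And>x. (\<And>y. y < x \<Longrightarrow> P y) \<Longrightarrow> P x"
  show "P a"
    by (induct a rule: measure_induct_rule[of "\<lambda>x. to_nat (Rep_ranked x)"])
      (rule step, simp add: less_ranked_def)
qed

lemma bij_Rep_ranked: "bij Rep_ranked"
  by (metis bij_betwI' Rep_ranked_inject Rep_ranked_cases UNIV_I)

lemma prod_Basis_vec: "(\<Prod>b\<in>Basis. (x::real^'n) \<bullet> b) = (\<Prod>i\<in>UNIV. x $ i)"
  by (simp add: Basis_vec_def cart_eq_inner_axis axis_eq_axis prod.UNION_disjoint)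

definition vec_reindex :: "('b::finite \<Rightarrow> 'a::finite) \<Rightarrow> 'c^'a \<Rightarrow> 'c^'b" where
  "vec_reindex p x = (\<chi> i. x $ p i)"

lemma vec_reindex_nth [simp]: "vec_reindex p x $ i = x $ p i"
  by (simp add: vec_reindex_def)

lemma vec_reindex_inv_left [simp]: "bij p \<Longrightarrow> vec_reindex (inv p) (vec_reindex p x) = x"
  by (simp add: vec_eq_iff bij_betw_inv_into_right)

lemma linear_vec_reindex: "linear (vec_reindex p :: real^'a \<Rightarrow> real^'b)"
  by (auto intro!: linearI simp: vec_eq_iff)

lemma inner_vec_reindex:
  fixes x y :: "real^'a"
  assumes "bij (p :: 'b::finite \<Rightarrow> 'a::finite)"
  shows "vec_reindex p x \<bullet> vec_reindex p y = x \<bullet> y"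
  unfolding inner_vec_def using sum.reindex_bij_betw[OF assms, of "\<lambda>j. x $ j \<bullet> y $ j"] by simp

lemma borel_measurable_linear:
  "linear (f :: 'a::euclidean_space \<Rightarrow> 'b::euclidean_space) \<Longrightarrow> f \<in> borel_measurable borel"
  by (intro borel_measurable_continuous_onI linear_continuous_on linear_conv_bounded_linear[THEN iffD1])

lemma lborel_distr_vec_reindex:
  assumes p: "bij (p :: 'b::finite \<Rightarrow> 'a::finite)"
  shows "distr lborel borel (vec_reindex p :: real^'a \<Rightarrow> real^'b) = lborel"
proof (rule lborel_eqI[symmetric])
  fix l u :: "real^'b"
  assume lu: "\<And>b. b \<in> Basis \<Longrightarrow> l \<bullet> b \<le> u \<bullet> b"
  have "l $ i \<le> u $ i" for i
    using lu[of "axis i 1"] by (auto simp: Basis_vec_def cart_eq_inner_axis)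
  then have le: "\<forall>b\<in>Basis. vec_reindex (inv p) l \<bullet> b \<le> vec_reindex (inv p) u \<bullet> b"
    by (auto simp: Basis_vec_def inner_axis)
  have "vec_reindex p -` box l u = box (vec_reindex (inv p) l) (vec_reindex (inv p) u)"
    unfolding set_eq_iff vimage_eq mem_box_cart vec_reindex_nth
    by (metis p bij_inv_eq_iff)
  moreover have "vec_reindex p \<in> borel_measurable (borel :: (real^'a) measure)"
    by (rule borel_measurable_linear[OF linear_vec_reindex])
  ultimately have "emeasure (distr lborel borel (vec_reindex p)) (box l u)
      = (\<Prod>b\<in>Basis. (vec_reindex (inv p) u - vec_reindex (inv p) l) \<bullet> b)"
    using le by (simp add: emeasure_distr emeasure_lborel_box_eq)
  also have "\<dots> = (\<Prod>b\<in>Basis. (u - l) \<bullet> b)"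
    unfolding prod_Basis_vec using prod.reindex_bij_betw[OF bij_imp_bij_inv[OF p], of "\<lambda>i. u $ i - l $ i"]
    by simp
  finally show "emeasure (distr lborel borel (vec_reindex p)) (box l u) = (\<Prod>b\<in>Basis. (u - l) \<bullet> b)" .
qed simp

lemma lborel_distr_orthogonal_transformation_wellorder:
  fixes Q :: "real^'n::{finite,wellorder} \<Rightarrow> real^'n::_"
  assumes Q: "orthogonal_transformation Q"
  shows "distr lborel borel Q = lborel"
proof (rule lborel_eqI[symmetric])
  fix l u :: "(real, 'n) vec"
  assume lu: "\<And>b. b \<in> Basis \<Longrightarrow> l \<bullet> b \<le> u \<bullet> b"
  have Q_meas: "Q \<in> borel_measurable borel"
    by (rule borel_measurable_linear[OF orthogonal_transformation_linear[OF Q]])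
  have Q_inv: "orthogonal_transformation (inv Q)"
    using Q orthogonal_transformation_inv by blast
  have preimage: "Q -` box l u = inv Q ` box l u"
    using orthogonal_transformation_bij[OF Q] by (simp add: bij_vimage_eq_inv_image)
  have "box l u \<in> lmeasurable" by simp
  have "emeasure (distr lborel borel Q) (box l u) = emeasure lebesgue (Q -` box l u)"
    using Q_meas by (simp add: emeasure_distr emeasure_completion measurable_sets_borel)
  also have "\<dots> = measure lebesgue (box l u)"
    unfolding preimage
    using measurable_orthogonal_image[OF Q_inv \<open>box l u \<in> lmeasurable\<close>]
      measure_orthogonal_image[OF Q_inv \<open>box l u \<in> lmeasurable\<close>]
    by (simp add: emeasure_eq_measure2)
  also have "\<dots> = emeasure lborel (box l u)"
    by (simp add: emeasure_eq_measure2 emeasure_completion)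
  also have "\<dots> = (\<Prod>b\<in>Basis. (u - l) \<bullet> b)"
    using lu by (simp add: emeasure_lborel_box_eq)
  finally show "emeasure (distr lborel borel Q) (box l u) = (\<Prod>b\<in>Basis. (u - l) \<bullet> b)" .
qed simp

lemma lborel_distr_orthogonal_transformation:
  fixes Q :: "real^'n::finite \<Rightarrow> real^'n"
  assumes Q: "orthogonal_transformation Q"
  shows "distr lborel borel Q = lborel"
proof -
  define R :: "real^'n \<Rightarrow> real^'n ranked" where "R = vec_reindex Rep_ranked"
  define R' :: "real^'n ranked \<Rightarrow> real^'n" where "R' = vec_reindex (inv Rep_ranked)"
  have R_meas [measurable]: "R \<in> borel_measurable borel" "R' \<in> borel_measurable borel"
    unfolding R_def R'_def by (intro borel_measurable_linear linear_vec_reindex)+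
  have bij: "bij (Rep_ranked :: 'n ranked \<Rightarrow> 'n)" "bij (inv (Rep_ranked :: 'n ranked \<Rightarrow> 'n))"
    using bij_Rep_ranked bij_imp_bij_inv by blast+
  have "orthogonal_transformation (R \<circ> Q \<circ> R')"
    using Q unfolding orthogonal_transformation_def R_def R'_def
    by (auto simp: inner_vec_reindex[OF bij(1)] inner_vec_reindex[OF bij(2)]
        intro: linear_compose linear_vec_reindex)
  then have [measurable]: "R \<circ> Q \<circ> R' \<in> borel_measurable borel"
    and distr_conj: "distr lborel borel (R \<circ> Q \<circ> R') = lborel"
    by (simp_all add: borel_measurable_linear orthogonal_transformation_linear
        lborel_distr_orthogonal_transformation_wellorder)
  have "Q = R' \<circ> ((R \<circ> Q \<circ> R') \<circ> R)"
    using bij by (simp add: fun_eq_iff R_def R'_def)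
  then have "distr lborel borel Q
      = distr (distr (distr lborel borel R) borel (R \<circ> Q \<circ> R')) borel R'"
    by (simp add: distr_distr)
  also have "\<dots> = lborel"
    using bij by (simp add: R_def R'_def lborel_distr_vec_reindex distr_conj[unfolded R_def R'_def])
  finally show ?thesis .
qed

lemma distr_PiM_componentwise:
  fixes M :: "'a measure"
  assumes M: "sigma_finite_measure M" and I: "finite I"
    and T: "T \<in> measurable M M" and T_preserving: "distr M M T = M"
  shows "distr (PiM I (\<lambda>_. M)) (PiM I (\<lambda>_. M)) (\<lambda>X. \<lambda>i\<in>I. T (X i)) = PiM I (\<lambda>_. M)"
proof -
  interpret product_sigma_finite "\<lambda>_. M"
    using M by (simp add: product_sigma_finite_def)
  have T_PiM: "(\<lambda>X. \<lambda>i\<in>I. T (X i)) \<in> measurable (PiM I (\<lambda>_. M)) (PiM I (\<lambda>_. M))"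
    using T by measurable
  show ?thesis
  proof (rule PiM_eqI)
    fix A assume A: "\<And>i. i \<in> I \<Longrightarrow> A i \<in> sets M"
    have preimage: "(\<lambda>X. \<lambda>i\<in>I. T (X i)) -` PiE I A \<inter> space (PiM I (\<lambda>_. M))
        = PiE I (\<lambda>i. T -` A i \<inter> space M)"
      using T by (auto simp: space_PiM PiE_def Pi_def extensional_def measurable_space)
    have "emeasure (distr (PiM I (\<lambda>_. M)) (PiM I (\<lambda>_. M)) (\<lambda>X. \<lambda>i\<in>I. T (X i))) (PiE I A)
        = emeasure (PiM I (\<lambda>_. M)) (PiE I (\<lambda>i. T -` A i \<inter> space M))"
      using A I by (simp add: emeasure_distr[OF T_PiM] preimage sets_PiM_I_finite)
    also have "\<dots> = (\<Prod>i\<in>I. emeasure M (T -` A i \<inter> space M))"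
      using A I T by (simp add: emeasure_PiM measurable_sets)
    also have "\<dots> = (\<Prod>i\<in>I. emeasure M (A i))"
      using A T by (intro prod.cong refl) (metis T_preserving emeasure_distr)
    finally show "emeasure (distr (PiM I (\<lambda>_. M)) (PiM I (\<lambda>_. M)) (\<lambda>X. \<lambda>i\<in>I. T (X i))) (PiE I A)
        = (\<Prod>i\<in>I. emeasure M (A i))" .
  qed (use I in simp_all)
qed

lemma nn_integral_PiM_lborel_orthogonal_transformation:
  fixes Q :: "real^'n::finite \<Rightarrow> real^'n"
  assumes Q: "orthogonal_transformation Q" and I: "finite I"
    and f: "f \<in> borel_measurable (PiM I (\<lambda>_. lborel))"
  shows "(\<integral>\<^sup>+ X. f (\<lambda>i\<in>I. Q (X i)) \<partial>PiM I (\<lambda>_. lborel)) = (\<integral>\<^sup>+ X. f X \<partial>PiM I (\<lambda>_. lborel))"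
proof -
  have [measurable]: "Q \<in> borel_measurable borel"
    by (rule borel_measurable_linear[OF orthogonal_transformation_linear[OF Q]])
  have "distr lborel lborel Q = lborel"
    using lborel_distr_orthogonal_transformation[OF Q] by (simp cong: distr_cong)
  then have PiM_preserved:
    "distr (PiM I (\<lambda>_. lborel)) (PiM I (\<lambda>_. lborel)) (\<lambda>X. \<lambda>i\<in>I. Q (X i)) = PiM I (\<lambda>_. lborel)"
    by (intro distr_PiM_componentwise[OF lborel.sigma_finite_measure_axioms I]) simp_all
  have "(\<integral>\<^sup>+ X. f (\<lambda>i\<in>I. Q (X i)) \<partial>PiM I (\<lambda>_. lborel))
      = (\<integral>\<^sup>+ X. f X \<partial>distr (PiM I (\<lambda>_. lborel)) (PiM I (\<lambda>_. lborel)) (\<lambda>X. \<lambda>i\<in>I. Q (X i)))"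
    using f[unfolded measurable_cong_sets[OF sets_PiM_cong[OF refl sets_lborel] refl]]
    by (intro nn_integral_distr[symmetric]) measurable
  then show ?thesis
    by (simp only: PiM_preserved)
qed

lemma householder_reflection:
  fixes c b :: "'a::real_inner"
  assumes "norm c = norm b"
  obtains R where "orthogonal_transformation R" "R c = b" "\<And>w. w \<bullet> c = w \<bullet> b \<Longrightarrow> R w = w"
proof (cases "c = b")
  case True
  then show ?thesis using that[of "\<lambda>x. x"] by auto
next
  case False
  define u where "u = c - b"
  have uu: "u \<bullet> u \<noteq> 0" using False by (simp add: u_def)
  define R where "R x = x - (2 * (x \<bullet> u) / (u \<bullet> u)) *\<^sub>R u" for x
  have "linear R" unfolding R_def
    by (auto intro!: linearI simp: inner_add_left add_divide_distrib algebra_simps)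
  moreover have "R v \<bullet> R w = v \<bullet> w" for v w
    using uu by (simp add: R_def inner_diff_left inner_diff_right inner_commute field_simps power2_eq_square)
  ultimately have "orthogonal_transformation R" by (simp add: orthogonal_transformation_def)
  moreover have "c \<bullet> c = b \<bullet> b"
    using assms by (simp add: dot_square_norm)
  then have "u \<bullet> u = 2 * (c \<bullet> u)"
    by (simp add: u_def inner_diff_left inner_diff_right inner_commute)
  then have "R c = b" using uu by (simp add: R_def u_def)
  moreover have "R w = w" if "w \<bullet> c = w \<bullet> b" for w
    using that by (simp add: R_def u_def inner_diff_right inner_commute inner_diff_left)
  ultimately show ?thesis using that by blast
qed

text \<open>The first reflection sends \<open>k0\<close> to \<open>k\<close>, the second the image of \<open>v0\<close> to \<open>v\<close>; the
  hypotheses make each of them fix all vectors it has to fix.\<close>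
lemma orthogonal_transformation_match_gram:
  fixes a b k v k0 v0 :: "'a::real_inner"
  assumes "k0 \<bullet> a = k \<bullet> a" "k0 \<bullet> b = k \<bullet> b" "v0 \<bullet> a = v \<bullet> a" "v0 \<bullet> b = v \<bullet> b"
    and "k0 \<bullet> k0 = k \<bullet> k" "v0 \<bullet> v0 = v \<bullet> v" "k0 \<bullet> v0 = k \<bullet> v"
  obtains Q where "orthogonal_transformation Q" "Q a = a" "Q b = b" "Q k0 = k" "Q v0 = v"
proof -
  have "norm k0 = norm k" using assms(5) by (simp add: norm_eq_sqrt_inner)
  then obtain R1 where R1: "orthogonal_transformation R1" "R1 k0 = k"
    "\<And>w. w \<bullet> k0 = w \<bullet> k \<Longrightarrow> R1 w = w"
    using householder_reflection by blast
  have R1_fix: "R1 a = a" "R1 b = b" using R1(3) assms(1,2) by (simp_all add: inner_commute)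
  have R1_inner: "R1 x \<bullet> R1 y = x \<bullet> y" for x y
    using R1(1) by (simp add: orthogonal_transformation_def)
  have "norm (R1 v0) = norm v"
    using assms(6) R1_inner[of v0 v0] by (simp add: norm_eq_sqrt_inner)
  then obtain R2 where R2: "orthogonal_transformation R2" "R2 (R1 v0) = v"
    "\<And>w. w \<bullet> R1 v0 = w \<bullet> v \<Longrightarrow> R2 w = w"
    using householder_reflection by blast
  have "R2 a = a" "R2 b = b" "R2 k = k"
    using R2(3) R1_inner[of a v0] R1_inner[of b v0] R1_inner[of k0 v0] R1_fix R1(2) assms(3,4,7)
    by (simp_all add: inner_commute)
  then show ?thesis
    using that[of "R2 \<circ> R1"] R1 R2 R1_fix by (simp add: orthogonal_transformation_compose)
qed

lemma measurable_proj [measurable]: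
  "(\<lambda>X. proj L X w) \<in> measurable (PiM {1..L} (\<lambda>_. lborel)) (PiM {1..L} (\<lambda>_. lborel))"
  unfolding proj_def by measurable

lemma borel_measurable_proj_nth [measurable]:
  "(\<lambda>X. proj L X w l) \<in> borel_measurable (PiM {1..L} (\<lambda>_. lborel))"
proof (cases "l \<in> {1..L}")
  case True
  then show ?thesis
    using measurable_compose[OF measurable_proj measurable_component_singleton[OF True]] by simp
qed (simp add: proj_def del: atLeastAtMost_iff)

lemma borel_measurable_attn:
  assumes "\<And>l. l \<in> {1..L} \<Longrightarrow> (\<lambda>z. \<sigma> L z l) \<in> borel_measurable (PiM {1..L} (\<lambda>_. lborel))"
  shows "(\<lambda>X. attn \<sigma> L X k v) \<in> borel_measurable (PiM {1..L} (\<lambda>_. lborel))"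
  unfolding attn_def
  by (intro borel_measurable_sum borel_measurable_times borel_measurable_proj_nth
      measurable_compose[OF measurable_proj assms])

lemma borel_measurable_dens_X:
  assumes "g L eps \<in> borel_measurable (PiM {1..L} (\<lambda>_. lborel))"
  shows "dens_X g kstar L eps \<in> borel_measurable (PiM {1..L} (\<lambda>_. lborel))"
  unfolding dens_X_def gauss_vec_def
  by (intro borel_measurable_times measurable_compose[OF measurable_proj assms]
      borel_measurable_prod) measurable

lemma proj_orthogonal_transformation:
  fixes Q :: "real^'d::finite \<Rightarrow> real^'d"
  shows "orthogonal_transformation Q \<Longrightarrow> proj L (\<lambda>l\<in>{1..L}. Q (X l)) (Q w) = proj L X w"
  unfolding proj_def by (auto simp: orthogonal_transformation_def intro!: restrict_ext)

lemma dens_X_orthogonal_transformation: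
  fixes Q :: "real^'d::finite \<Rightarrow> real^'d"
  assumes "orthogonal_transformation Q"
  shows "dens_X g (Q kstar) L eps (\<lambda>l\<in>{1..L}. Q (X l)) = dens_X g kstar L eps X"
  unfolding dens_X_def proj_orthogonal_transformation[OF assms]
  using assms by (auto simp: gauss_vec_def orthogonal_transformation_norm intro!: prod.cong)

lemma attn_orthogonal_transformation:
  fixes Q :: "real^'d::finite \<Rightarrow> real^'d"
  shows "orthogonal_transformation Q \<Longrightarrow> attn \<sigma> L (\<lambda>l\<in>{1..L}. Q (X l)) (Q k) (Q v) = attn \<sigma> L X k v"
  unfolding attn_def by (simp only: proj_orthogonal_transformation)

definition cond_risk ::
    "(nat \<Rightarrow> nat \<Rightarrow> (nat \<Rightarrow> real) \<Rightarrow> real) \<Rightarrow> (nat \<Rightarrow> (nat \<Rightarrow> real) \<Rightarrow> (nat \<Rightarrow> real)) \<Rightarrow> real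
      \<Rightarrow> real^'d::finite \<Rightarrow> real^'d \<Rightarrow> nat \<Rightarrow> nat \<Rightarrow> real^'d \<Rightarrow> real^'d \<Rightarrow> ennreal" where
  "cond_risk g \<sigma> \<Delta> kstar vstar L eps k v =
     (\<integral>\<^sup>+ X. (\<integral>\<^sup>+ \<xi>. ennreal (dens_X g kstar L eps X * normal_density 0 1 \<xi>) *
          ennreal ((proj L X vstar eps + \<Delta> * \<xi> - attn \<sigma> L X k v)\<^sup>2) \<partial>lborel)
      \<partial>PiM {1..L} (\<lambda>_. lborel))"

lemma risk_eq_cond_risk:
  "risk PL g \<sigma> \<Delta> kstar vstar k v =
     (\<integral>\<^sup>+ L. (\<Sum>eps\<in>{1..L}. ennreal (1 / real L) * cond_risk g \<sigma> \<Delta> kstar vstar L eps k v)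
      \<partial>measure_pmf PL)"
  by (simp add: risk_def cond_risk_def)

lemma cond_risk_orthogonal_transformation:
  fixes Q :: "real^'d::finite \<Rightarrow> real^'d"
  assumes g_meas: "g L eps \<in> borel_measurable (PiM {1..L} (\<lambda>_. lborel))"
    and \<sigma>_meas: "\<And>l. l \<in> {1..L} \<Longrightarrow> (\<lambda>z. \<sigma> L z l) \<in> borel_measurable (PiM {1..L} (\<lambda>_. lborel))"
    and Q: "orthogonal_transformation Q" and Q_kstar: "Q kstar = kstar" and Q_vstar: "Q vstar = vstar"
  shows "cond_risk g \<sigma> \<Delta> kstar vstar L eps (Q k) (Q v) = cond_risk g \<sigma> \<Delta> kstar vstar L eps k v"
proof -
  note [measurable] = borel_measurable_dens_X[of g L eps, OF g_meas]
    borel_measurable_attn[of L \<sigma>, OF \<sigma>_meas]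
  have dens_eq: "dens_X g kstar L eps (\<lambda>l\<in>{1..L}. Q (X l)) = dens_X g kstar L eps X"
    and proj_eq: "proj L (\<lambda>l\<in>{1..L}. Q (X l)) vstar = proj L X vstar" for X
    using dens_X_orthogonal_transformation[OF Q, of g kstar] proj_orthogonal_transformation[OF Q]
      Q_kstar Q_vstar by metis+
  have "(\<lambda>X. \<integral>\<^sup>+ \<xi>. ennreal (dens_X g kstar L eps X * normal_density 0 1 \<xi>) *
            ennreal ((proj L X vstar eps + \<Delta> * \<xi> - attn \<sigma> L X (Q k) (Q v))\<^sup>2) \<partial>lborel)
      \<in> borel_measurable (PiM {1..L} (\<lambda>_. lborel))"
    by measurable
  from nn_integral_PiM_lborel_orthogonal_transformation[OF Q _ this]
  show ?thesis
    unfolding cond_risk_def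
    by (simp only: finite_atLeastAtMost dens_eq proj_eq attn_orthogonal_transformation[OF Q]
        simp_thms)
qed

lemma risk_orthogonal_transformation:
  fixes Q :: "real^'d::finite \<Rightarrow> real^'d"
  assumes PL: "set_pmf PL \<subseteq> {1..Lbar}"
    and g_meas: "\<And>L eps. L \<in> {1..Lbar} \<Longrightarrow> eps \<in> {1..L} \<Longrightarrow>
        g L eps \<in> borel_measurable (PiM {1..L} (\<lambda>_. lborel))"
    and \<sigma>_meas: "\<And>L l. L \<in> {1..Lbar} \<Longrightarrow> l \<in> {1..L} \<Longrightarrow>
        (\<lambda>z. \<sigma> L z l) \<in> borel_measurable (PiM {1..L} (\<lambda>_. lborel))"
    and Q: "orthogonal_transformation Q" and Q_kstar: "Q kstar = kstar" and Q_vstar: "Q vstar = vstar"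
  shows "risk PL g \<sigma> \<Delta> kstar vstar (Q k) (Q v) = risk PL g \<sigma> \<Delta> kstar vstar k v"
proof -
  have "cond_risk g \<sigma> \<Delta> kstar vstar L eps (Q k) (Q v) = cond_risk g \<sigma> \<Delta> kstar vstar L eps k v"
    if "L \<in> set_pmf PL" "eps \<in> {1..L}" for L eps
    using that PL
    by (intro cond_risk_orthogonal_transformation g_meas \<sigma>_meas Q Q_kstar Q_vstar) auto
  then show ?thesis
    unfolding risk_eq_cond_risk by (intro nn_integral_cong_AE AE_pmfI sum.cong) simp_all
qed

lemma risk_eq_if_gram_eq:
  fixes kstar vstar k v k0 v0 :: "real^'d::finite"
  assumes PL: "set_pmf PL \<subseteq> {1..Lbar}"
    and g_meas: "\<And>L eps. L \<in> {1..Lbar} \<Longrightarrow> eps \<in> {1..L} \<Longrightarrow>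
        g L eps \<in> borel_measurable (PiM {1..L} (\<lambda>_. lborel))"
    and \<sigma>_meas: "\<And>L l. L \<in> {1..Lbar} \<Longrightarrow> l \<in> {1..L} \<Longrightarrow>
        (\<lambda>z. \<sigma> L z l) \<in> borel_measurable (PiM {1..L} (\<lambda>_. lborel))"
    and "k0 \<bullet> kstar = k \<bullet> kstar" "k0 \<bullet> vstar = k \<bullet> vstar" "v0 \<bullet> kstar = v \<bullet> kstar"
      "v0 \<bullet> vstar = v \<bullet> vstar" "k0 \<bullet> k0 = k \<bullet> k" "v0 \<bullet> v0 = v \<bullet> v" "k0 \<bullet> v0 = k \<bullet> v"
  shows "risk PL g \<sigma> \<Delta> kstar vstar k0 v0 = risk PL g \<sigma> \<Delta> kstar vstar k v"
proof -
  obtain Q where Q: "orthogonal_transformation Q" "Q kstar = kstar" "Q vstar = vstar"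
    and "Q k0 = k" "Q v0 = v"
    using orthogonal_transformation_match_gram assms(4-) by blast
  then show ?thesis
    by (metis risk_orthogonal_transformation[OF PL _ _ Q] g_meas \<sigma>_meas)
qed

lemma factors_through_invariant:
  assumes "\<And>x y. q x = q y \<Longrightarrow> f x = f y"
  shows "\<exists>h. \<forall>x. f x = h (q x)"
proof
  show "\<forall>x. f x = f (SOME y. q y = q x)"
    using assms by (metis (mono_tags) someI)
qed

theorem proposition3:
  fixes PL :: "nat pmf" and Lbar :: nat and \<Delta> :: real
    and g :: "nat \<Rightarrow> nat \<Rightarrow> (nat \<Rightarrow> real) \<Rightarrow> real"
    and \<sigma> :: "nat \<Rightarrow> (nat \<Rightarrow> real) \<Rightarrow> (nat \<Rightarrow> real)"
    and kstar vstar :: "real^'d"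
  assumes Lbar: "Lbar \<ge> 1"
    and PL: "set_pmf PL \<subseteq> {1..Lbar}"
    and Delta: "\<Delta> \<ge> 0"
    and g_meas: "\<And>L eps. L \<in> {1..Lbar} \<Longrightarrow> eps \<in> {1..L} \<Longrightarrow>
        g L eps \<in> borel_measurable (PiM {1..L} (\<lambda>_. lborel))"
    and g_nonneg: "\<And>L eps z. L \<in> {1..Lbar} \<Longrightarrow> eps \<in> {1..L} \<Longrightarrow>
        z \<in> space (PiM {1..L} (\<lambda>_. (lborel :: real measure))) \<Longrightarrow> g L eps z \<ge> 0"
    and g_dens: "\<And>L eps. L \<in> {1..Lbar} \<Longrightarrow> eps \<in> {1..L} \<Longrightarrow>
        (\<integral>\<^sup>+ X. ennreal (dens_X g kstar L eps X)
           \<partial>(PiM {1..L} (\<lambda>_. (lborel :: (real^'d) measure)))) = 1"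
    and \<sigma>_meas: "\<And>L l. L \<in> {1..Lbar} \<Longrightarrow> l \<in> {1..L} \<Longrightarrow>
        (\<lambda>z. \<sigma> L z l) \<in> borel_measurable (PiM {1..L} (\<lambda>_. lborel))"
    and finite: "\<And>k v. risk PL g \<sigma> \<Delta> kstar vstar k v < \<infinity>"
  shows "\<exists>Et :: real \<Rightarrow> real \<Rightarrow> real \<Rightarrow> real \<Rightarrow> real \<Rightarrow> real \<Rightarrow> real \<Rightarrow> real.
    \<forall>k v :: real^'d.
      enn2real (risk PL g \<sigma> \<Delta> kstar vstar k v) =
      Et ((k \<bullet> kstar) / real CARD('d)) ((v \<bullet> vstar) / real CARD('d))
         ((k \<bullet> vstar) / real CARD('d)) ((v \<bullet> kstar) / real CARD('d))
         ((k \<bullet> k) / real CARD('d)) ((v \<bullet> v) / real CARD('d))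
         ((k \<bullet> v) / real CARD('d))"
proof -
  define overlaps :: "(real^'d) \<times> (real^'d) \<Rightarrow> real \<times> real \<times> real \<times> real \<times> real \<times> real \<times> real"
    where "overlaps = (\<lambda>(k, v). ((k \<bullet> kstar) / real CARD('d), (v \<bullet> vstar) / real CARD('d),
      (k \<bullet> vstar) / real CARD('d), (v \<bullet> kstar) / real CARD('d),
      (k \<bullet> k) / real CARD('d), (v \<bullet> v) / real CARD('d), (k \<bullet> v) / real CARD('d)))"
  have "enn2real (risk PL g \<sigma> \<Delta> kstar vstar k0 v0) = enn2real (risk PL g \<sigma> \<Delta> kstar vstar k v)"
    if "overlaps (k0, v0) = overlaps (k, v)" for k0 v0 k v
    using that unfolding overlaps_def
    by (intro arg_cong[where f = enn2real] risk_eq_if_gram_eq[OF PL] g_meas \<sigma>_meas) simp_all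
  then obtain h where "\<forall>kv. enn2real (risk PL g \<sigma> \<Delta> kstar vstar (fst kv) (snd kv)) = h (overlaps kv)"
    using factors_through_invariant[of overlaps
        "\<lambda>kv. enn2real (risk PL g \<sigma> \<Delta> kstar vstar (fst kv) (snd kv))"]
    by (metis prod.collapse)
  then show ?thesis
    by (intro exI[of _ "\<lambda>a b c d e f g. h (a, b, c, d, e, f, g)"]) (auto simp: overlaps_def)
qed

end
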